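(* Let $\Theta$ be a standard bunch in $(E\xrightarrow{Q}K,\gamma)$. Then $\mathcal O(X_\Theta)=\mathbb K$ (only constant global regular functions) if and only if $Q$ maps no ray of $\gamma$ to $\{0\}$ and the image $Q(\gamma)$ is strictly convex.
   Context: Work over an algebraically closed field $\mathbb K$ of characteristic zero. Lattices are finitely generated free abelian groups; cones are convex polyhedral; $\tau^\circ$ relative interior, $\preceq$ face relation, $\mathrm{lin}$ linear span. A projected cone $(E\xrightarrow{Q}K,\gamma)$ is a surjective lattice map with a simplicial full-dimensional cone $\gamma\subset E_{\mathbb Q}$; its dual is $(F\xrightarrow{P}N,\delta)$ with $F=\mathrm{Hom}(E,\mathbb Z)$, $N=\mathrm{Hom}(\ker Q,\mathbb Z)$, $P$ restriction, $\delta=\gamma^\vee$; $\gamma_0^*:=\gamma_0^\perp\cap\delta$. A bunch is a nonempty set $\Theta$ of projected faces $Q(\gamma_0)$, $\gamma_0\preceq\gamma$, such that a projected face $\tau_0$ lies in $\Theta$ iff $\emptyset\ne\tau_0^\circ\cap\tau^\circ\ne\tau^\circ$ for all $\tau\in\Theta\setminus\{\tau_0\}$; $\mathrm{cov}(\Theta)$ is the set of faces $\gamma_0\preceq\gamma$ minimal with $Q(\gamma_0)\supseteq\tau$ for some $\tau\in\Theta$. $\Theta$ is standard if for every facet $\gamma_i$ of $\gamma$: $K=Q(\mathrm{lin}(\gamma_i)\cap E)$ and some $\tau\in\Theta$ has $\tau^\circ\subset Q(\gamma_i)^\circ$. For standard $\Theta$, the cones $P(\sigma)$, $\sigma\preceq\gamma_0^*$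 with $\gamma_0\in\mathrm{cov}(\Theta)$, form a fan $\Delta(\Theta)$ in $N$, and $X_\Theta$ is its toric variety. *)

theory Defs
  imports "HOL-Analysis.Analysis" "HOL-Computational_Algebra.Polynomial"
begin

text \<open>Coordinates: E = F = integral points of real^'r (F paired with E by the dot product,
  i.e. the dual basis), K = integral points of real^'k. Rational cones are modelled as
  real cones with integral generators.\<close>

definition lattice_pts :: "(real^'n) set" where
  "lattice_pts = {x. \<forall>i. x $ i \<in> \<int>}"

definition int_matrix :: "real^'r^'k \<Rightarrow> bool" where
  "int_matrix Q \<longleftrightarrow> (\<forall>i j. Q $ i $ j \<in> \<int>)"

definition gen_cone :: "(real^'n) set \<Rightarrow> (real^'n) set" where
  "gen_cone B = {x. \<exists>c. (\<forall>b\<in>B. 0 \<le> c b) \<and> x = (\<Sum>b\<in>B. c b *\<^sub>R b)}"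

definition projected_cone :: "real^'r^'k \<Rightarrow> (real^'r) set \<Rightarrow> bool" where
  "projected_cone Q \<gamma> \<longleftrightarrow> int_matrix Q \<and>
     (\<lambda>x. Q *v x) ` lattice_pts = lattice_pts \<and>
     (\<exists>B. independent B \<and> card B = CARD('r) \<and> B \<subseteq> lattice_pts \<and> \<gamma> = gen_cone B)"

definition cone_face :: "('a::real_vector) set \<Rightarrow> 'a set \<Rightarrow> bool" where
  "cone_face g C \<longleftrightarrow> g face_of C \<and> g \<noteq> {}"

definition proj_faces :: "real^'r^'k \<Rightarrow> (real^'r) set \<Rightarrow> (real^'k) set set" where
  "proj_faces Q \<gamma> = {(\<lambda>x. Q *v x) ` g | g. cone_face g \<gamma>}"

definition is_bunch :: "real^'r^'k \<Rightarrow> (real^'r) set \<Rightarrow> (real^'k) set set \<Rightarrow> bool" where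
  "is_bunch Q \<gamma> \<Theta> \<longleftrightarrow> \<Theta> \<noteq> {} \<and> \<Theta> \<subseteq> proj_faces Q \<gamma> \<and>
     (\<forall>\<tau>0\<in>proj_faces Q \<gamma>. \<tau>0 \<in> \<Theta> \<longleftrightarrow>
        (\<forall>\<tau>\<in>\<Theta> - {\<tau>0}. rel_interior \<tau>0 \<inter> rel_interior \<tau> \<noteq> {} \<and>
                        rel_interior \<tau>0 \<inter> rel_interior \<tau> \<noteq> rel_interior \<tau>))"

definition cov :: "real^'r^'k \<Rightarrow> (real^'r) set \<Rightarrow> (real^'k) set set \<Rightarrow> (real^'r) set set" where
  "cov Q \<gamma> \<Theta> = {g. cone_face g \<gamma> \<and> (\<exists>\<tau>\<in>\<Theta>. \<tau> \<subseteq> (\<lambda>x. Q *v x) ` g) \<and>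
      (\<forall>g'. cone_face g' g \<and> (\<exists>\<tau>\<in>\<Theta>. \<tau> \<subseteq> (\<lambda>x. Q *v x) ` g') \<longrightarrow> g' = g)}"

definition facet :: "('a::euclidean_space) set \<Rightarrow> 'a set \<Rightarrow> bool" where
  "facet g C \<longleftrightarrow> g face_of C \<and> aff_dim g = aff_dim C - 1"

definition ray :: "('a::euclidean_space) set \<Rightarrow> 'a set \<Rightarrow> bool" where
  "ray \<rho> C \<longleftrightarrow> cone_face \<rho> C \<and> aff_dim \<rho> = 1"

definition is_standard :: "real^'r^'k \<Rightarrow> (real^'r) set \<Rightarrow> (real^'k) set set \<Rightarrow> bool" where
  "is_standard Q \<gamma> \<Theta> \<longleftrightarrow>
     (\<forall>g. facet g \<gamma> \<longrightarrow>
        (\<lambda>x. Q *v x) ` (span g \<inter> lattice_pts) = lattice_pts \<and>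
        (\<exists>\<tau>\<in>\<Theta>. rel_interior \<tau> \<subseteq> rel_interior ((\<lambda>x. Q *v x) ` g)))"

definition dual_cone :: "(real^'r) set \<Rightarrow> (real^'r) set" where
  "dual_cone C = {u. \<forall>x\<in>C. 0 \<le> u \<bullet> x}"

definition perp_face :: "(real^'r) set \<Rightarrow> (real^'r) set \<Rightarrow> (real^'r) set" where
  "perp_face \<gamma> g = {u \<in> dual_cone \<gamma>. \<forall>x\<in>g. u \<bullet> x = 0}"

text \<open>The cones sigma of F_Q with sigma a face of gamma_0^* for gamma_0 in cov(Theta);
  their images P(sigma) are the cones of the fan Delta(Theta) in N.\<close>
definition fan_cones_pre :: "real^'r^'k \<Rightarrow> (real^'r) set \<Rightarrow> (real^'k) set set \<Rightarrow> (real^'r) set set" where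
  "fan_cones_pre Q \<gamma> \<Theta> = {\<sigma>. \<exists>g\<in>cov Q \<gamma> \<Theta>. cone_face \<sigma> (perp_face \<gamma> g)}"

text \<open>M = Hom(N,Z) = ker Q. Dual cone of P(sigma) inside M_Q = ker Q_Q, using
  <P u, m> = <u, m> for m in ker Q.\<close>
definition chart_dual :: "real^'r^'k \<Rightarrow> (real^'r) set \<Rightarrow> (real^'r) set" where
  "chart_dual Q \<sigma> = {m. Q *v m = 0 \<and> (\<forall>u\<in>\<sigma>. 0 \<le> u \<bullet> m)}"

text \<open>Global regular functions of the toric variety X_Theta: elements of the Laurent
  polynomial ring K[M] (finitely supported coefficient functions on M) lying in every
  affine chart algebra K[P(sigma)^vee \<inter> M], sigma in Delta(Theta).\<close>
definition global_functions :: "real^'r^'k \<Rightarrow> (real^'r) set \<Rightarrow> (real^'k) set set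
     \<Rightarrow> (real^'r \<Rightarrow> 'a::field) set" where
  "global_functions Q \<gamma> \<Theta> = {f. finite {m. f m \<noteq> 0} \<and>
      (\<forall>m. f m \<noteq> 0 \<longrightarrow> m \<in> lattice_pts \<and> Q *v m = 0) \<and>
      (\<forall>\<sigma>\<in>fan_cones_pre Q \<gamma> \<Theta>. \<forall>m. f m \<noteq> 0 \<longrightarrow> m \<in> chart_dual Q \<sigma>)}"

definition constant_functions :: "(real^'r \<Rightarrow> 'a::field) set" where
  "constant_functions = {f. \<exists>c. f = (\<lambda>m. if m = 0 then c else 0)}"

definition strictly_convex :: "('a::real_vector) set \<Rightarrow> bool" where
  "strictly_convex C \<longleftrightarrow> (\<forall>x. x \<in> C \<and> - x \<in> C \<longrightarrow> x = 0)"

definition alg_closed_field :: "'a::field itself \<Rightarrow> bool" where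
  "alg_closed_field _ \<longleftrightarrow> (\<forall>p::'a poly. 0 < degree p \<longrightarrow> (\<exists>x. poly p x = 0))"

end

theory Submission
  imports Defs
begin

(* Global functions of X_Theta are the finitely supported Laurent polynomials whose degrees lie in
  the dual of every cone P(sigma) of Delta(Theta). For gamma = cone(B) simplicial and Theta standard
  these duals cut out exactly gamma \<inter> ker Q: if a degree m had a negative B-coordinate at b,
  standardness yields a face in cov(Theta) inside the facet cone(B - {b}), and the b-th coordinate
  functional lies in its gamma_0^*, so it is nonnegative on m. Hence O(X_Theta) = K iff
  gamma \<inter> ker Q contains no nonzero lattice point, iff (the cone being rational)
  gamma \<inter> ker Q = 0, iff no ray of gamma is contracted and Q(gamma) is pointed. *)

section \<open>Nonnegative rational solutions of rational linear systems\<close>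

lemma Rats_linear_retraction_exists:
  "\<exists>\<psi>::real \<Rightarrow> real. \<psi> 1 = 1 \<and> (\<forall>x y. \<psi> (x + y) = \<psi> x + \<psi> y) \<and>
     (\<forall>q x. q \<in> \<rat> \<longrightarrow> \<psi> (q * x) = q * \<psi> x) \<and> range \<psi> \<subseteq> \<rat>"
proof -
  define sc where "sc = (\<lambda>(q::rat) (x::real). of_rat q * x)"
  have "vector_space sc"
    unfolding sc_def by unfold_locales (auto simp: algebra_simps of_rat_add of_rat_mult)
  then interpret QV: vector_space sc .
  define H where "H = QV.extend_basis {1}"
  have one: "QV.independent {1}"
    by (simp add: QV.independent_insertI QV.span_empty)
  have H: "1 \<in> H" "QV.independent H" "QV.span H = UNIV"
    using QV.extend_basis_superset[OF one] QV.independent_extend_basis[OF one]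
      QV.span_extend_basis[OF one]
    unfolding H_def by auto
  define \<psi> where "\<psi> x = real_of_rat (QV.representation H x 1)" for x
  have "\<psi> 1 = 1"
    using QV.representation_basis[OF H(2,1)] by (simp add: \<psi>_def)
  moreover have "\<psi> (x + y) = \<psi> x + \<psi> y" for x y
    using QV.representation_add[OF H(2)] H(3) by (simp add: \<psi>_def of_rat_add)
  moreover have "\<psi> (q * x) = q * \<psi> x" if "q \<in> \<rat>" for q x
    using that QV.representation_scale[OF H(2), of x] H(3)
    by (auto simp: \<psi>_def sc_def of_rat_mult elim!: Rats_cases)
  moreover have "range \<psi> \<subseteq> \<rat>"
    by (auto simp: \<psi>_def)
  ultimately show ?thesis by blast
qed

lemma additive_sum:
  fixes \<psi> :: "real \<Rightarrow> real"
  assumes "\<And>x y. \<psi> (x + y) = \<psi> x + \<psi> y"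
  shows "\<psi> (\<Sum>s\<in>S. f s) = (\<Sum>s\<in>S. \<psi> (f s))"
proof -
  have "\<psi> 0 = 0"
    using assms[of 0 0] by simp
  then show ?thesis
    by (induction S rule: infinite_finite_induct) (auto simp: assms)
qed

lemma Rats_linear_map_solution:
  fixes v :: "'s \<Rightarrow> 'a::euclidean_space" and \<psi> :: "real \<Rightarrow> real"
  assumes \<psi>_add: "\<And>x y. \<psi> (x + y) = \<psi> x + \<psi> y"
    and \<psi>_scale: "\<And>q x. q \<in> \<rat> \<Longrightarrow> \<psi> (q * x) = q * \<psi> x"
    and v_rat: "\<And>s i. s \<in> S \<Longrightarrow> i \<in> Basis \<Longrightarrow> v s \<bullet> i \<in> \<rat>"
    and c_sol: "(\<Sum>s\<in>S. c s *\<^sub>R v s) = 0"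
  shows "(\<Sum>s\<in>S. \<psi> (c s) *\<^sub>R v s) = 0"
proof (rule euclidean_eqI)
  fix i :: 'a assume "i \<in> Basis"
  have "(\<Sum>s\<in>S. \<psi> (c s) *\<^sub>R v s) \<bullet> i = (\<Sum>s\<in>S. \<psi> ((v s \<bullet> i) * c s))"
    unfolding inner_sum_left
    by (intro sum.cong refl) (simp add: \<psi>_scale v_rat \<open>i \<in> Basis\<close>)
  also have "\<dots> = \<psi> ((\<Sum>s\<in>S. c s *\<^sub>R v s) \<bullet> i)"
    by (simp add: additive_sum[OF \<psi>_add] inner_sum_left mult.commute)
  also have "\<dots> = 0"
    using \<psi>_add[of 0 0] c_sol by simp
  finally show "(\<Sum>s\<in>S. \<psi> (c s) *\<^sub>R v s) \<bullet> i = 0 \<bullet> i"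
    by simp
qed

lemma nonneg_solution_shrink_support:
  fixes v :: "'s \<Rightarrow> 'a::real_vector"
  assumes "finite S" and c_nonneg: "\<forall>s\<in>S. c s \<ge> 0" and c_sol: "(\<Sum>s\<in>S. c s *\<^sub>R v s) = 0"
    and e_sol: "(\<Sum>s\<in>S. e s *\<^sub>R v s) = 0" and "s\<^sub>0 \<in> S" "e s\<^sub>0 > 0"
    and e_supp: "\<forall>s\<in>S. c s = 0 \<longrightarrow> e s = 0"
  obtains c' where "\<forall>s\<in>S. c' s \<ge> 0" "(\<Sum>s\<in>S. c' s *\<^sub>R v s) = 0"
    "{s\<in>S. c' s \<noteq> 0} \<subset> {s\<in>S. c s \<noteq> 0}" "\<forall>s\<in>S. e s = 0 \<longrightarrow> c' s = c s"
proof -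
  define P where "P = {s\<in>S. e s > 0}"
  have "finite P" "P \<noteq> {}"
    using assms by (auto simp: P_def)
  define t where "t = Min ((\<lambda>s. c s / e s) ` P)"
  have "t \<in> (\<lambda>s. c s / e s) ` P" and t_le: "\<And>s. s \<in> P \<Longrightarrow> t \<le> c s / e s"
    unfolding t_def using \<open>finite P\<close> \<open>P \<noteq> {}\<close> by auto
  then obtain s\<^sub>1 where s\<^sub>1: "s\<^sub>1 \<in> P" "t = c s\<^sub>1 / e s\<^sub>1"
    by blast
  then have "t \<ge> 0"
    using c_nonneg by (auto simp: P_def)
  define c' where "c' s = c s - t * e s" for s
  have "c' s \<ge> 0" if "s \<in> S" for s
  proof (cases "e s > 0")
    case True
    then show ?thesis
      using t_le[of s] that by (auto simp: P_def c'_def pos_le_divide_eq)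
  next
    case False
    then show ?thesis
      using c_nonneg that mult_nonneg_nonpos[OF \<open>t \<ge> 0\<close>, of "e s"] by (force simp: c'_def)
  qed
  moreover have "(\<Sum>s\<in>S. c' s *\<^sub>R v s) = (\<Sum>s\<in>S. c s *\<^sub>R v s) - t *\<^sub>R (\<Sum>s\<in>S. e s *\<^sub>R v s)"
    by (simp add: c'_def scaleR_diff_left sum_subtractf scaleR_sum_right)
  then have "(\<Sum>s\<in>S. c' s *\<^sub>R v s) = 0"
    using c_sol e_sol by simp
  moreover have "c' s\<^sub>1 = 0" "c s\<^sub>1 \<noteq> 0" "\<forall>s\<in>S. c s = 0 \<longrightarrow> c' s = 0"
    using s\<^sub>1 e_supp by (auto simp: P_def c'_def)
  then have "{s\<in>S. c' s \<noteq> 0} \<subset> {s\<in>S. c s \<noteq> 0}"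
    using s\<^sub>1 by (auto simp: P_def)
  moreover have "\<forall>s\<in>S. e s = 0 \<longrightarrow> c' s = c s"
    by (simp add: c'_def)
  ultimately show ?thesis
    using that by blast
qed

lemma solution_in_min_support_vanishes:
  fixes v :: "'s \<Rightarrow> 'a::real_vector"
  assumes "finite S" and c_nonneg: "\<forall>s\<in>S. c s \<ge> 0" and c_sol: "(\<Sum>s\<in>S. c s *\<^sub>R v s) = 0"
    and c_min: "\<And>c'. \<forall>s\<in>S. c' s \<ge> 0 \<Longrightarrow> (\<Sum>s\<in>S. c' s *\<^sub>R v s) = 0 \<Longrightarrow>
      {s\<in>S. c' s \<noteq> 0} \<subset> {s\<in>S. c s \<noteq> 0} \<Longrightarrow> \<forall>s\<in>S. c' s = 0"
    and e_sol: "(\<Sum>s\<in>S. e s *\<^sub>R v s) = 0" and e_supp: "\<forall>s\<in>S. c s = 0 \<longrightarrow> e s = 0"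
    and "s\<^sub>0 \<in> S" "c s\<^sub>0 \<noteq> 0" "e s\<^sub>0 = 0"
  shows "\<forall>s\<in>S. e s = 0"
proof (rule ccontr)
  assume "\<not> (\<forall>s\<in>S. e s = 0)"
  then obtain s where "s \<in> S" "e s \<noteq> 0"
    by blast
  obtain e' where e'_sol: "(\<Sum>s\<in>S. e' s *\<^sub>R v s) = 0" and "e' s > 0"
    and e'_zero: "\<forall>s\<in>S. e s = 0 \<longrightarrow> e' s = 0"
  proof (cases "e s > 0")
    case True
    then show ?thesis
      using that[of e] e_sol by blast
  next
    case False
    then have "- e s > 0"
      using \<open>e s \<noteq> 0\<close> by simp
    then show ?thesis
      using that[of "\<lambda>s. - e s"] e_sol by (simp add: sum_negf)
  qed
  obtain c' where c': "\<forall>s\<in>S. c' s \<ge> 0" "(\<Sum>s\<in>S. c' s *\<^sub>R v s) = 0"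
      "{s\<in>S. c' s \<noteq> 0} \<subset> {s\<in>S. c s \<noteq> 0}"
    and c'_keep: "\<forall>s\<in>S. e' s = 0 \<longrightarrow> c' s = c s"
    using nonneg_solution_shrink_support[OF \<open>finite S\<close> c_nonneg c_sol e'_sol \<open>s \<in> S\<close> \<open>e' s > 0\<close>]
      e_supp e'_zero by blast
  have "\<forall>s\<in>S. c' s = 0"
    using c' by (rule c_min)
  moreover have "c' s\<^sub>0 = c s\<^sub>0"
    using c'_keep e'_zero \<open>e s\<^sub>0 = 0\<close> \<open>s\<^sub>0 \<in> S\<close> by blast
  ultimately show False
    using \<open>s\<^sub>0 \<in> S\<close> \<open>c s\<^sub>0 \<noteq> 0\<close> by simp
qed

lemma exists_min_support_nonneg_solution:
  fixes v :: "'s \<Rightarrow> 'a::real_vector"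
  assumes "finite S" "\<forall>s\<in>S. c s \<ge> 0" "\<exists>s\<in>S. c s \<noteq> 0" "(\<Sum>s\<in>S. c s *\<^sub>R v s) = 0"
  obtains d s\<^sub>0 where "\<forall>s\<in>S. d s \<ge> 0" "(\<Sum>s\<in>S. d s *\<^sub>R v s) = 0" "s\<^sub>0 \<in> S" "d s\<^sub>0 = 1"
    "\<And>c'. \<forall>s\<in>S. c' s \<ge> 0 \<Longrightarrow> (\<Sum>s\<in>S. c' s *\<^sub>R v s) = 0 \<Longrightarrow>
      {s\<in>S. c' s \<noteq> 0} \<subset> {s\<in>S. d s \<noteq> 0} \<Longrightarrow> \<forall>s\<in>S. c' s = 0"
proof -
  define sol where "sol c \<longleftrightarrow> (\<forall>s\<in>S. c s \<ge> 0) \<and> (\<exists>s\<in>S. c s \<noteq> 0) \<and> (\<Sum>s\<in>S. c s *\<^sub>R v s) = 0"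
    for c
  obtain c where "sol c" and c_min: "\<And>c'. sol c' \<Longrightarrow> card {s\<in>S. c s \<noteq> 0} \<le> card {s\<in>S. c' s \<noteq> 0}"
    using ex_has_least_nat[of sol c "\<lambda>c. card {s\<in>S. c s \<noteq> 0}"] assms(2-4) by (auto simp: sol_def)
  then obtain s\<^sub>0 where "s\<^sub>0 \<in> S" "c s\<^sub>0 > 0"
    by (force simp: sol_def)
  define d where "d s = c s / c s\<^sub>0" for s
  have "(\<Sum>s\<in>S. d s *\<^sub>R v s) = (1 / c s\<^sub>0) *\<^sub>R (\<Sum>s\<in>S. c s *\<^sub>R v s)"
    by (simp add: d_def scaleR_sum_right)
  then have d: "\<forall>s\<in>S. d s \<ge> 0" "(\<Sum>s\<in>S. d s *\<^sub>R v s) = 0" "d s\<^sub>0 = 1"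
    using \<open>sol c\<close> \<open>c s\<^sub>0 > 0\<close> by (auto simp: sol_def d_def)
  have "{s\<in>S. d s \<noteq> 0} = {s\<in>S. c s \<noteq> 0}"
    using \<open>c s\<^sub>0 > 0\<close> by (auto simp: d_def)
  have d_min: "\<forall>s\<in>S. c' s = 0"
    if "\<forall>s\<in>S. c' s \<ge> 0" "(\<Sum>s\<in>S. c' s *\<^sub>R v s) = 0" "{s\<in>S. c' s \<noteq> 0} \<subset> {s\<in>S. d s \<noteq> 0}"
    for c'
  proof (rule ccontr)
    assume "\<not> (\<forall>s\<in>S. c' s = 0)"
    then have "card {s\<in>S. c s \<noteq> 0} \<le> card {s\<in>S. c' s \<noteq> 0}"
      using that by (intro c_min) (auto simp: sol_def)
    moreover have "card {s\<in>S. c' s \<noteq> 0} < card {s\<in>S. c s \<noteq> 0}"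
      using that(3) \<open>finite S\<close> \<open>{s\<in>S. d s \<noteq> 0} = {s\<in>S. c s \<noteq> 0}\<close>
      by (intro psubset_card_mono) auto
    ultimately show False
      by simp
  qed
  from d(1,2) \<open>s\<^sub>0 \<in> S\<close> d(3) d_min show ?thesis
    by (rule that)
qed

(* psi is a Q-linear retraction of R onto Q. For a solution d of minimal support normalised at s0,
  d - psi o d is again a solution, supported inside supp d and vanishing at s0, hence zero. *)
lemma nonneg_rat_solution:
  fixes v :: "'s \<Rightarrow> 'a::euclidean_space"
  assumes "finite S" and v_rat: "\<And>s i. s \<in> S \<Longrightarrow> i \<in> Basis \<Longrightarrow> v s \<bullet> i \<in> \<rat>"
    and "\<forall>s\<in>S. c s \<ge> 0" "\<exists>s\<in>S. c s \<noteq> 0" "(\<Sum>s\<in>S. c s *\<^sub>R v s) = 0"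
  obtains d where "\<forall>s\<in>S. d s \<in> \<rat> \<and> d s \<ge> 0" "\<exists>s\<in>S. d s \<noteq> 0" "(\<Sum>s\<in>S. d s *\<^sub>R v s) = 0"
proof -
  obtain d s\<^sub>0 where d_nonneg: "\<forall>s\<in>S. d s \<ge> 0" and d_sol: "(\<Sum>s\<in>S. d s *\<^sub>R v s) = 0"
    and "s\<^sub>0 \<in> S" "d s\<^sub>0 = 1"
    and d_min: "\<And>c'. \<forall>s\<in>S. c' s \<ge> 0 \<Longrightarrow> (\<Sum>s\<in>S. c' s *\<^sub>R v s) = 0 \<Longrightarrow>
      {s\<in>S. c' s \<noteq> 0} \<subset> {s\<in>S. d s \<noteq> 0} \<Longrightarrow> \<forall>s\<in>S. c' s = 0"
    by (rule exists_min_support_nonneg_solution[OF assms(1,3-5)]) (rule that)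
  obtain \<psi> :: "real \<Rightarrow> real" where \<psi>: "\<psi> 1 = 1" "\<And>x y. \<psi> (x + y) = \<psi> x + \<psi> y"
    "\<And>q x. q \<in> \<rat> \<Longrightarrow> \<psi> (q * x) = q * \<psi> x" "range \<psi> \<subseteq> \<rat>"
    using Rats_linear_retraction_exists by blast
  have "\<psi> 0 = 0"
    using \<psi>(2)[of 0 0] by simp
  define e where "e s = d s - \<psi> (d s)" for s
  have "(\<Sum>s\<in>S. \<psi> (d s) *\<^sub>R v s) = 0"
    using \<psi>(2,3) v_rat d_sol by (rule Rats_linear_map_solution)
  then have e_sol: "(\<Sum>s\<in>S. e s *\<^sub>R v s) = 0"
    using d_sol by (simp add: e_def scaleR_diff_left sum_subtractf)
  have e_supp: "\<forall>s\<in>S. d s = 0 \<longrightarrow> e s = 0" and "e s\<^sub>0 = 0" "d s\<^sub>0 \<noteq> 0"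
    using \<open>\<psi> 0 = 0\<close> \<psi>(1) \<open>d s\<^sub>0 = 1\<close> by (auto simp: e_def)
  have "\<forall>s\<in>S. e s = 0"
    by (rule solution_in_min_support_vanishes[OF \<open>finite S\<close> d_nonneg d_sol d_min e_sol e_supp
          \<open>s\<^sub>0 \<in> S\<close> \<open>d s\<^sub>0 \<noteq> 0\<close> \<open>e s\<^sub>0 = 0\<close>])
  then have "\<forall>s\<in>S. d s \<in> \<rat>"
    using \<psi>(4) by (auto simp: e_def)
  then have "\<forall>s\<in>S. d s \<in> \<rat> \<and> d s \<ge> 0"
    using d_nonneg by blast
  moreover have "\<exists>s\<in>S. d s \<noteq> 0"
    using \<open>s\<^sub>0 \<in> S\<close> \<open>d s\<^sub>0 = 1\<close> by force
  ultimately show ?thesis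
    using d_sol by (rule that)
qed

lemma Rats_common_denominator:
  fixes d :: "'s \<Rightarrow> real"
  assumes "finite S" "\<forall>s\<in>S. d s \<in> \<rat>"
  shows "\<exists>n::nat. n > 0 \<and> (\<forall>s\<in>S. of_nat n * d s \<in> \<int>)"
  using assms
proof (induction S rule: finite_induct)
  case (insert s S)
  then obtain n :: nat where "n > 0" and n: "\<forall>t\<in>S. of_nat n * d t \<in> \<int>"
    by auto
  obtain a b :: int where "d s = of_int a / of_int b" "b > 0"
    using insert.prems by (blast elim: Rats_cases')
  then have "of_nat (nat b) * d s \<in> \<int>"
    by simp
  have "of_nat (n * nat b) * d t \<in> \<int>" if "t \<in> insert s S" for t
  proof (cases "t = s")
    case True
    have "of_nat (n * nat b) * d t = of_nat n * (of_nat (nat b) * d s)"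
      using True by simp
    then show ?thesis
      by (metis Ints_mult Ints_of_nat \<open>of_nat (nat b) * d s \<in> \<int>\<close>)
  next
    case False
    have "of_nat (n * nat b) * d t = of_nat (nat b) * (of_nat n * d t)"
      by simp
    moreover have "of_nat n * d t \<in> \<int>"
      using n that False by simp
    ultimately show ?thesis
      by (metis Ints_mult Ints_of_nat)
  qed
  moreover have "n * nat b > 0"
    using \<open>n > 0\<close> \<open>b > 0\<close> by simp
  ultimately show ?case
    by blast
qed auto

lemma lattice_pts_inner_Basis:
  assumes "x \<in> lattice_pts" "i \<in> Basis"
  shows "x \<bullet> i \<in> \<int>"
proof -
  obtain j where "i = axis j 1"
    using assms(2) by (auto simp: Basis_vec_def)
  then show ?thesis
    using assms(1) by (simp add: inner_axis lattice_pts_def)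
qed

lemma int_matrix_mult_lattice_pts:
  assumes "int_matrix Q" "x \<in> lattice_pts"
  shows "Q *v x \<in> lattice_pts"
  using assms unfolding int_matrix_def lattice_pts_def matrix_vector_mult_def
  by (auto intro!: Ints_sum Ints_mult)

lemma lattice_pts_sum_scaleR:
  assumes "\<And>s. s \<in> S \<Longrightarrow> c s \<in> \<int>" "\<And>s. s \<in> S \<Longrightarrow> v s \<in> lattice_pts"
  shows "(\<Sum>s\<in>S. c s *\<^sub>R v s) \<in> lattice_pts"
  using assms unfolding lattice_pts_def by (auto simp: sum_component intro!: Ints_sum Ints_mult)

section \<open>Cones generated by finite sets\<close>

lemma linear_functional_eq_inner:
  fixes f :: "'a::euclidean_space \<Rightarrow> real"
  assumes "linear f"
  obtains u where "\<And>x. f x = u \<bullet> x"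
proof
  show "f x = adjoint f 1 \<bullet> x" for x
    using adjoint_clauses(2)[OF assms, of 1 x] by simp
qed

lemma convex_cone_sum:
  "convex_cone S \<Longrightarrow> (\<And>a. a \<in> A \<Longrightarrow> f a \<in> S) \<Longrightarrow> sum f A \<in> S"
  by (induction A rule: infinite_finite_induct) (auto simp: convex_cone_contains_0 convex_cone_add)

lemma convex_cone_gen_cone: "convex_cone (gen_cone B)"
  unfolding convex_cone_iff
proof (intro conjI ballI allI impI)
  show "0 \<in> gen_cone B"
    unfolding gen_cone_def by (auto intro!: exI[of _ "\<lambda>_. 0"])
next
  fix x y assume "x \<in> gen_cone B" "y \<in> gen_cone B"
  then obtain c d where "\<forall>b\<in>B. 0 \<le> c b" "x = (\<Sum>b\<in>B. c b *\<^sub>R b)"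
    and "\<forall>b\<in>B. 0 \<le> d b" "y = (\<Sum>b\<in>B. d b *\<^sub>R b)"
    unfolding gen_cone_def by blast
  then show "x + y \<in> gen_cone B"
    unfolding gen_cone_def
    by (auto intro!: exI[of _ "\<lambda>b. c b + d b"] simp: scaleR_add_left sum.distrib)
next
  fix x and a :: real assume "x \<in> gen_cone B" "a \<ge> 0"
  then obtain c where "\<forall>b\<in>B. 0 \<le> c b" "x = (\<Sum>b\<in>B. c b *\<^sub>R b)"
    unfolding gen_cone_def by blast
  then show "a *\<^sub>R x \<in> gen_cone B"
    unfolding gen_cone_def using \<open>a \<ge> 0\<close>
    by (auto intro!: exI[of _ "\<lambda>b. a * c b"] simp: scaleR_sum_right)
qed

lemma subset_gen_cone:
  assumes "finite B"
  shows "B \<subseteq> gen_cone B"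
proof
  fix b assume "b \<in> B"
  then have "b = (\<Sum>b'\<in>B. (if b' = b then 1 else 0) *\<^sub>R b')"
    using assms by (simp add: if_distrib[of "\<lambda>c. c *\<^sub>R _"] cong: if_cong)
  then show "b \<in> gen_cone B"
    unfolding gen_cone_def by (auto intro!: exI[of _ "\<lambda>b'. if b' = b then 1 else 0"])
qed

lemma gen_cone_eq_convex_cone_hull:
  assumes "finite B"
  shows "gen_cone B = convex_cone hull B"
proof
  show "convex_cone hull B \<subseteq> gen_cone B"
    using subset_gen_cone[OF assms] convex_cone_gen_cone by (rule hull_minimal)
  show "gen_cone B \<subseteq> convex_cone hull B"
  proof
    fix x assume "x \<in> gen_cone B"
    then obtain c where c: "\<forall>b\<in>B. 0 \<le> c b" and x: "x = (\<Sum>b\<in>B. c b *\<^sub>R b)"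
      unfolding gen_cone_def by blast
    have "c b *\<^sub>R b \<in> convex_cone hull B" if "b \<in> B" for b
      using c that by (simp add: convex_cone_hull_mul hull_inc)
    then show "x \<in> convex_cone hull B"
      unfolding x by (rule convex_cone_sum[OF convex_cone_convex_cone_hull])
  qed
qed

lemma polyhedron_gen_cone: "finite B \<Longrightarrow> polyhedron (gen_cone B)"
  by (simp add: gen_cone_eq_convex_cone_hull polyhedron_convex_cone_hull)

lemma closed_linear_image_gen_cone:
  fixes f :: "real^'n \<Rightarrow> 'a::euclidean_space"
  shows "finite B \<Longrightarrow> linear f \<Longrightarrow> closed (f ` gen_cone B)"
  by (simp add: gen_cone_eq_convex_cone_hull convex_cone_hull_linear_image[symmetric]
      closed_convex_cone_hull finite_imageI)

lemma span_gen_cone: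
  assumes "finite B"
  shows "span (gen_cone B) = span B"
proof -
  have "convex_cone hull B \<subseteq> span B"
    by (intro hull_minimal span_superset convex_cone_span)
  moreover have "B \<subseteq> span (convex_cone hull B)"
    using hull_subset[of B convex_cone] span_superset[of "convex_cone hull B"] by (rule order_trans)
  ultimately show ?thesis
    unfolding span_eq gen_cone_eq_convex_cone_hull[OF assms] ..
qed

lemma gen_cone_singleton: "gen_cone {b} = {c *\<^sub>R b | c. 0 \<le> c}"
  unfolding gen_cone_def by auto

lemma ray_contains_nonzero:
  assumes "ray \<rho> C"
  obtains x where "x \<in> \<rho>" "x \<noteq> 0"
proof -
  have "\<not> \<rho> \<subseteq> {0}"
  proof
    assume "\<rho> \<subseteq> {0}"
    then have "\<rho> = {} \<or> \<rho> = {0}"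
      by blast
    then show False
      using assms by (auto simp: ray_def)
  qed
  then obtain x where "x \<in> \<rho>" "x \<noteq> 0"
    by blast
  then show ?thesis
    by (rule that)
qed

lemma subset_closed_if_rel_interior_subset:
  fixes S T :: "'a::euclidean_space set"
  assumes "convex T" "closed S" "rel_interior T \<subseteq> S"
  shows "T \<subseteq> S"
proof -
  have "T \<subseteq> closure (rel_interior T)"
    using convex_closure_rel_interior[OF assms(1)] closure_subset by blast
  also have "\<dots> \<subseteq> S"
    using assms(2,3) by (simp add: closure_minimal)
  finally show ?thesis .
qed

section \<open>Simplicial cones\<close>

locale simplicial_basis =
  fixes B :: "(real^'n) set"
  assumes independent_B: "independent B" and span_B: "span B = UNIV"
begin

lemma finite_B: "finite B"
  using independent_bound independent_B by blast

lemma sum_representation: "(\<Sum>b\<in>B. representation B x b *\<^sub>R b) = x"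
  using real_vector.sum_representation_eq[OF independent_B _ finite_B order_refl] span_B by simp

lemma representation_combination:
  assumes "b \<in> B"
  shows "representation B (\<Sum>b'\<in>B. c b' *\<^sub>R b') b = c b"
proof -
  have "representation B (\<Sum>b'\<in>B. c b' *\<^sub>R b') b = (\<Sum>b'\<in>B. c b' * representation B b' b)"
    using span_B by (simp add: real_vector.representation_sum[OF independent_B]
        real_vector.representation_scale[OF independent_B])
  also have "\<dots> = c b"
    using assms finite_B by (simp add: real_vector.representation_basis[OF independent_B] if_distrib
        cong: if_cong)
  finally show ?thesis .
qed

lemma representation_eq_0_iff: "(\<forall>b\<in>B. representation B x b = 0) \<longleftrightarrow> x = 0"
proof
  assume "\<forall>b\<in>B. representation B x b = 0"
  then have "(\<Sum>b\<in>B. representation B x b *\<^sub>R b) = 0"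
    by simp
  then show "x = 0"
    by (simp only: sum_representation)
qed (simp add: real_vector.representation_zero)

lemma linear_coordinate: "linear (\<lambda>x. representation B x b)"
  using bounded_linear_representation[OF independent_B span_B] bounded_linear.linear by blast

lemma mem_gen_cone_iff:
  assumes "B' \<subseteq> B"
  shows "x \<in> gen_cone B' \<longleftrightarrow>
    (\<forall>b\<in>B'. 0 \<le> representation B x b) \<and> (\<forall>b\<in>B - B'. representation B x b = 0)"
proof
  assume "x \<in> gen_cone B'"
  then obtain c where c: "\<forall>b\<in>B'. 0 \<le> c b" "x = (\<Sum>b\<in>B'. c b *\<^sub>R b)"
    unfolding gen_cone_def by blast
  then have "x = (\<Sum>b\<in>B. (if b \<in> B' then c b else 0) *\<^sub>R b)"
    using assms finite_B
    by (simp add: if_distrib[of "\<lambda>c. c *\<^sub>R _"] sum.If_cases Int_absorb1 cong: if_cong)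
  then show "(\<forall>b\<in>B'. 0 \<le> representation B x b) \<and> (\<forall>b\<in>B - B'. representation B x b = 0)"
    using c(1) assms by (auto simp: representation_combination)
next
  assume rep: "(\<forall>b\<in>B'. 0 \<le> representation B x b) \<and> (\<forall>b\<in>B - B'. representation B x b = 0)"
  have "x = (\<Sum>b\<in>B. representation B x b *\<^sub>R b)"
    by (rule sum_representation[symmetric])
  also have "\<dots> = (\<Sum>b\<in>B'. representation B x b *\<^sub>R b)"
    using rep assms finite_B by (intro sum.mono_neutral_right) auto
  finally have "x = (\<Sum>b\<in>B'. representation B x b *\<^sub>R b)" .
  then show "x \<in> gen_cone B'"
    unfolding gen_cone_def using rep by blast
qed

lemma mem_cone_iff: "x \<in> gen_cone B \<longleftrightarrow> (\<forall>b\<in>B. 0 \<le> representation B x b)"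
  using mem_gen_cone_iff[of B] by simp

lemma basis_mem_gen_cone: "b \<in> B \<Longrightarrow> b \<in> gen_cone B"
  using subset_gen_cone[OF finite_B] by blast

lemma gen_cone_pointed:
  assumes "x \<in> gen_cone B" "- x \<in> gen_cone B"
  shows "x = 0"
proof -
  have "representation B (- x) b = - representation B x b" for b
    using span_B by (simp add: real_vector.representation_neg[OF independent_B])
  then have "\<forall>b\<in>B. representation B x b = 0"
    using assms by (force simp: mem_cone_iff)
  then show ?thesis
    by (simp add: representation_eq_0_iff)
qed

lemma gen_cone_face_of:
  assumes "B' \<subseteq> B"
  shows "gen_cone B' face_of gen_cone B"
proof -
  have "linear (\<lambda>x. \<Sum>b\<in>B - B'. representation B x b)"
    using linear_coordinate by (intro linear_compose_sum) auto
  then obtain u where u: "\<And>x. (\<Sum>b\<in>B - B'. representation B x b) = u \<bullet> x"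
    using linear_functional_eq_inner by blast
  have u_nonneg: "0 \<le> u \<bullet> x" if "x \<in> gen_cone B" for x
    using that unfolding mem_cone_iff u[symmetric] by (auto intro!: sum_nonneg)
  have "x \<in> gen_cone B' \<longleftrightarrow> x \<in> gen_cone B \<and> u \<bullet> x = 0" for x
  proof -
    have "x \<in> gen_cone B' \<longleftrightarrow>
        (\<forall>b\<in>B. 0 \<le> representation B x b) \<and> (\<forall>b\<in>B - B'. representation B x b = 0)"
      using assms by (force simp: mem_gen_cone_iff)
    also have "\<dots> \<longleftrightarrow> x \<in> gen_cone B \<and> (\<Sum>b\<in>B - B'. representation B x b) = 0"
    proof (cases "x \<in> gen_cone B")
      case True
      then have "(\<Sum>b\<in>B - B'. representation B x b) = 0 \<longleftrightarrow> (\<forall>b\<in>B - B'. representation B x b = 0)"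
        using finite_B by (intro sum_nonneg_eq_0_iff) (auto simp: mem_cone_iff)
      then show ?thesis
        using True by (auto simp: mem_cone_iff)
    qed (auto simp: mem_cone_iff)
    finally show ?thesis
      by (simp add: u)
  qed
  then have "gen_cone B' = gen_cone B \<inter> {x. u \<bullet> x = 0}"
    by auto
  also have "\<dots> face_of gen_cone B"
    using convex_cone_gen_cone[of B] u_nonneg
    by (intro face_of_Int_supporting_hyperplane_ge) (auto simp: convex_cone_def)
  finally show ?thesis .
qed

lemma aff_dim_gen_cone:
  assumes "B' \<subseteq> B"
  shows "aff_dim (gen_cone B') = int (card B')"
proof -
  have "finite B'"
    using assms finite_B finite_subset by blast
  have "0 \<in> affine hull gen_cone B'"
    by (intro hull_inc convex_cone_contains_0 convex_cone_gen_cone)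
  then have "aff_dim (gen_cone B') = int (dim (gen_cone B'))"
    by (rule aff_dim_zero)
  also have "dim (gen_cone B') = dim (span (gen_cone B'))"
    by (rule dim_span[symmetric])
  also have "\<dots> = dim (span B')"
    by (simp only: span_gen_cone[OF \<open>finite B'\<close>])
  also have "\<dots> = card B'"
    using independent_mono[OF independent_B assms] by (rule dim_span_eq_card_independent)
  finally show ?thesis .
qed

lemma facet_gen_cone_Diff:
  assumes "b \<in> B"
  shows "facet (gen_cone (B - {b})) (gen_cone B)"
proof -
  have "card B \<ge> 1"
    using assms finite_B card_gt_0_iff[of B] by auto
  then show ?thesis
    using gen_cone_face_of[of "B - {b}"] aff_dim_gen_cone[of "B - {b}"] aff_dim_gen_cone[of B]
      assms finite_B
    by (simp add: facet_def card_Diff_singleton of_nat_diff)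
qed

lemma ray_gen_cone_singleton: "b \<in> B \<Longrightarrow> ray (gen_cone {b}) (gen_cone B)"
  using gen_cone_face_of[of "{b}"] aff_dim_gen_cone[of "{b}"]
  by (auto simp: ray_def cone_face_def gen_cone_singleton)

lemma representation_minus_component:
  assumes "b \<in> B"
  shows "representation B (x - c *\<^sub>R b) b' = representation B x b' - (if b' = b then c else 0)"
  using assms span_B
  by (simp add: real_vector.representation_diff[OF independent_B]
      real_vector.representation_scale[OF independent_B] real_vector.representation_basis[OF independent_B])

lemma strictly_convex_image_gen_cone:
  assumes "linear f" and trivial: "gen_cone B \<inter> {x. f x = 0} = {0}"
  shows "strictly_convex (f ` gen_cone B)"
  unfolding strictly_convex_def
proof (intro allI impI)
  fix y assume "y \<in> f ` gen_cone B \<and> - y \<in> f ` gen_cone B"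
  then obtain a a' where a: "a \<in> gen_cone B" "a' \<in> gen_cone B" "f a = y" "f a' = - y"
    by (metis imageE)
  then have "a + a' \<in> gen_cone B \<inter> {x. f x = 0}"
    using convex_cone_add[OF convex_cone_gen_cone] by (simp add: linear_add[OF assms(1)])
  then have "a' = - a"
    using trivial by (simp add: eq_neg_iff_add_eq_0 add.commute)
  then have "a = 0"
    using a gen_cone_pointed by blast
  then show "y = 0"
    using a linear_0[OF assms(1)] by simp
qed

lemma kernel_contains_generator:
  assumes "linear f" "strictly_convex (f ` gen_cone B)" "x \<in> gen_cone B" "f x = 0" "x \<noteq> 0"
  obtains b where "b \<in> B" "f b = 0"
proof -
  obtain b where "b \<in> B" "representation B x b \<noteq> 0"
    using assms(5) representation_eq_0_iff by blast
  then have s: "representation B x b > 0" (is "?s > 0")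
    using assms(3) by (force simp: mem_cone_iff)
  have "x - ?s *\<^sub>R b \<in> gen_cone B"
    using assms(3) \<open>b \<in> B\<close> by (simp add: mem_cone_iff representation_minus_component)
  then have "(1 / ?s) *\<^sub>R (x - ?s *\<^sub>R b) \<in> gen_cone B"
    using s convex_cone_gen_cone[of B] by (simp add: convex_cone_iff)
  moreover have "f ((1 / ?s) *\<^sub>R (x - ?s *\<^sub>R b)) = - f b"
    using s assms(4) by (simp add: linear_scale[OF assms(1)] linear_diff[OF assms(1)])
  ultimately have "f b \<in> f ` gen_cone B" "- f b \<in> f ` gen_cone B"
    using basis_mem_gen_cone[OF \<open>b \<in> B\<close>] by (metis image_eqI)+
  then have "f b = 0"
    using assms(2) unfolding strictly_convex_def by blast
  with \<open>b \<in> B\<close> show ?thesis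
    by (rule that)
qed

lemma cone_Int_kernel_eq_0_iff:
  assumes "linear f"
  shows "gen_cone B \<inter> {x. f x = 0} = {0} \<longleftrightarrow>
    (\<forall>\<rho>. ray \<rho> (gen_cone B) \<longrightarrow> f ` \<rho> \<noteq> {0}) \<and> strictly_convex (f ` gen_cone B)"
proof
  assume trivial: "gen_cone B \<inter> {x. f x = 0} = {0}"
  have "f ` \<rho> \<noteq> {0}" if \<rho>: "ray \<rho> (gen_cone B)" for \<rho>
  proof
    assume "f ` \<rho> = {0}"
    obtain x where "x \<in> \<rho>" "x \<noteq> 0"
      using \<rho> by (rule ray_contains_nonzero)
    moreover have "\<rho> \<subseteq> gen_cone B"
      using \<rho> by (auto simp: ray_def cone_face_def dest: face_of_imp_subset)
    ultimately show False
      using \<open>f ` \<rho> = {0}\<close> trivial by blast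
  qed
  then show "(\<forall>\<rho>. ray \<rho> (gen_cone B) \<longrightarrow> f ` \<rho> \<noteq> {0}) \<and> strictly_convex (f ` gen_cone B)"
    using strictly_convex_image_gen_cone[OF assms trivial] by blast
next
  assume rays: "(\<forall>\<rho>. ray \<rho> (gen_cone B) \<longrightarrow> f ` \<rho> \<noteq> {0}) \<and> strictly_convex (f ` gen_cone B)"
  have "x = 0" if x: "x \<in> gen_cone B" "f x = 0" for x
  proof (rule ccontr)
    assume "x \<noteq> 0"
    obtain b where "b \<in> B" "f b = 0"
      by (rule kernel_contains_generator[OF assms conjunct2[OF rays] x \<open>x \<noteq> 0\<close>])
    then have "\<forall>y\<in>gen_cone {b}. f y = 0"
      by (auto simp: gen_cone_singleton linear_scale[OF assms])
    moreover have "0 \<in> gen_cone {b}"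
      by (rule convex_cone_contains_0[OF convex_cone_gen_cone])
    ultimately have "f ` gen_cone {b} = {0}"
      by force
    then show False
      using rays ray_gen_cone_singleton[OF \<open>b \<in> B\<close>] by blast
  qed
  then show "gen_cone B \<inter> {x. f x = 0} = {0}"
    using convex_cone_contains_0[OF convex_cone_gen_cone] linear_0[OF assms] by blast
qed

lemma nonneg_rat_coordinates_in_kernel:
  assumes "int_matrix Q" "B \<subseteq> lattice_pts" "x \<in> gen_cone B" "Q *v x = 0" "x \<noteq> 0"
  obtains d where "\<forall>b\<in>B. d b \<in> \<rat> \<and> d b \<ge> 0" "\<exists>b\<in>B. d b \<noteq> 0"
    "(\<Sum>b\<in>B. d b *\<^sub>R (Q *v b)) = 0"
proof -
  have c_nonneg: "\<forall>b\<in>B. 0 \<le> representation B x b"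
    using assms(3) by (simp add: mem_cone_iff)
  have c_nonzero: "\<exists>b\<in>B. representation B x b \<noteq> 0"
    using assms(5) representation_eq_0_iff by blast
  have "Q *v x = Q *v (\<Sum>b\<in>B. representation B x b *\<^sub>R b)"
    by (simp only: sum_representation)
  then have c_sol: "(\<Sum>b\<in>B. representation B x b *\<^sub>R (Q *v b)) = 0"
    using assms(4)
    by (simp add: linear_sum[OF matrix_vector_mul_linear] linear_scale[OF matrix_vector_mul_linear])
  have v_rat: "(Q *v b) \<bullet> i \<in> \<rat>" if "b \<in> B" "i \<in> Basis" for b i
  proof -
    have "Q *v b \<in> lattice_pts"
      using assms(1,2) that(1) by (blast intro: int_matrix_mult_lattice_pts)
    then show ?thesis
      using lattice_pts_inner_Basis[OF _ that(2)] Ints_subset_Rats by blast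
  qed
  obtain d where "\<forall>b\<in>B. d b \<in> \<rat> \<and> d b \<ge> 0" "\<exists>b\<in>B. d b \<noteq> 0"
    "(\<Sum>b\<in>B. d b *\<^sub>R (Q *v b)) = 0"
    by (rule nonneg_rat_solution[OF finite_B v_rat c_nonneg c_nonzero c_sol])
  then show ?thesis
    by (rule that)
qed

lemma lattice_point_in_cone_kernel:
  assumes "int_matrix Q" "B \<subseteq> lattice_pts" "x \<in> gen_cone B" "Q *v x = 0" "x \<noteq> 0"
  obtains m where "m \<in> lattice_pts" "m \<in> gen_cone B" "Q *v m = 0" "m \<noteq> 0"
proof -
  obtain d where d: "\<forall>b\<in>B. d b \<in> \<rat> \<and> d b \<ge> 0" "\<exists>b\<in>B. d b \<noteq> 0"
    "(\<Sum>b\<in>B. d b *\<^sub>R (Q *v b)) = 0"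
    by (rule nonneg_rat_coordinates_in_kernel[OF assms]) (rule that)
  obtain n :: nat where "n > 0" and n: "\<forall>b\<in>B. of_nat n * d b \<in> \<int>"
    using Rats_common_denominator[OF finite_B, of d] d(1) by auto
  define m where "m = (\<Sum>b\<in>B. (of_nat n * d b) *\<^sub>R b)"
  have m_lattice: "m \<in> lattice_pts"
    unfolding m_def using n assms(2) by (intro lattice_pts_sum_scaleR) auto
  have "\<forall>b\<in>B. 0 \<le> of_nat n * d b"
    using d(1) by simp
  then have m_cone: "m \<in> gen_cone B"
    unfolding m_def gen_cone_def by (intro CollectI exI[of _ "\<lambda>b. of_nat n * d b"] conjI refl)
  have "Q *v m = of_nat n *\<^sub>R (\<Sum>b\<in>B. d b *\<^sub>R (Q *v b))"
    unfolding m_def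
    by (simp add: linear_sum[OF matrix_vector_mul_linear] linear_scale[OF matrix_vector_mul_linear]
        scaleR_sum_right)
  then have m_kernel: "Q *v m = 0"
    using d(3) by simp
  obtain b where "b \<in> B" "d b \<noteq> 0"
    using d(2) by blast
  have "representation B m b = of_nat n * d b"
    unfolding m_def using \<open>b \<in> B\<close> by (rule representation_combination)
  then have m_nonzero: "m \<noteq> 0"
    using \<open>n > 0\<close> \<open>d b \<noteq> 0\<close> by (auto simp: real_vector.representation_zero)
  from m_lattice m_cone m_kernel m_nonzero show ?thesis
    by (rule that)
qed

lemma lattice_cone_kernel_eq_0_iff:
  assumes "int_matrix Q" "B \<subseteq> lattice_pts"
  shows "lattice_pts \<inter> gen_cone B \<inter> {m. Q *v m = 0} = {0} \<longleftrightarrow>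
    gen_cone B \<inter> {x. Q *v x = 0} = {0}"
proof -
  have "0 \<in> lattice_pts \<inter> gen_cone B \<inter> {m. Q *v m = 0}"
    by (simp add: lattice_pts_def convex_cone_contains_0[OF convex_cone_gen_cone])
  moreover have "gen_cone B \<inter> {x. Q *v x = 0} \<subseteq> {0}"
    if "lattice_pts \<inter> gen_cone B \<inter> {m. Q *v m = 0} \<subseteq> {0}"
  proof
    fix x assume x: "x \<in> gen_cone B \<inter> {x. Q *v x = 0}"
    show "x \<in> {0}"
    proof (rule ccontr)
      assume "x \<notin> {0}"
      obtain m where "m \<in> lattice_pts" "m \<in> gen_cone B" "Q *v m = 0" "m \<noteq> 0"
        by (rule lattice_point_in_cone_kernel[OF assms, of x]) (use x \<open>x \<notin> {0}\<close> in auto)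
      then show False
        using that by blast
    qed
  qed
  ultimately show ?thesis
    by blast
qed

end

section \<open>Global functions of X_Theta\<close>

lemma cone_kernel_subset_chart_dual:
  assumes "\<sigma> \<in> fan_cones_pre Q \<gamma> \<Theta>" "m \<in> \<gamma>" "Q *v m = 0"
  shows "m \<in> chart_dual Q \<sigma>"
proof -
  obtain g where "cone_face \<sigma> (perp_face \<gamma> g)"
    using assms(1) unfolding fan_cones_pre_def by blast
  then have "\<sigma> \<subseteq> dual_cone \<gamma>"
    unfolding cone_face_def perp_face_def by (blast dest: face_of_imp_subset)
  then show ?thesis
    using assms(2,3) unfolding chart_dual_def dual_cone_def by blast
qed

lemma perp_face_mem_fan_cones_pre:
  assumes "g \<in> cov Q \<gamma> \<Theta>"
  shows "perp_face \<gamma> g \<in> fan_cones_pre Q \<gamma> \<Theta>"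
proof -
  have "convex (perp_face \<gamma> g)"
    unfolding convex_def perp_face_def dual_cone_def by (auto simp: inner_add_left)
  moreover have "0 \<in> perp_face \<gamma> g"
    unfolding perp_face_def dual_cone_def by simp
  ultimately show ?thesis
    using assms face_of_refl unfolding fan_cones_pre_def cone_face_def by blast
qed

lemma exists_cov_subset_face:
  assumes "F face_of \<gamma>" "F \<noteq> {}" "polyhedron F" "\<tau> \<in> \<Theta>" "\<tau> \<subseteq> (\<lambda>x. Q *v x) ` F"
  obtains g where "g \<in> cov Q \<gamma> \<Theta>" "g \<subseteq> F"
proof -
  define \<F> where "\<F> = {g. g face_of F \<and> g \<noteq> {} \<and> (\<exists>\<tau>\<in>\<Theta>. \<tau> \<subseteq> (\<lambda>x. Q *v x) ` g)}"
  have "finite \<F>"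
    using finite_polyhedron_faces[OF assms(3)] by (rule finite_subset[rotated]) (auto simp: \<F>_def)
  moreover have "F \<in> \<F>"
    using assms polyhedron_imp_convex face_of_refl by (auto simp: \<F>_def)
  ultimately obtain g where "g \<in> \<F>" and g_min: "\<forall>g'\<in>\<F>. g' \<subseteq> g \<longrightarrow> g = g'"
    using finite_has_minimal2 by metis
  then have "g face_of F" "g \<noteq> {}" "\<exists>\<tau>\<in>\<Theta>. \<tau> \<subseteq> (\<lambda>x. Q *v x) ` g"
    by (auto simp: \<F>_def)
  have "g \<in> cov Q \<gamma> \<Theta>"
    unfolding cov_def cone_face_def
  proof (intro CollectI conjI allI impI)
    show "g face_of \<gamma>"
      using \<open>g face_of F\<close> assms(1) by (rule face_of_trans)
    fix g' assume g': "(g' face_of g \<and> g' \<noteq> {}) \<and> (\<exists>\<tau>\<in>\<Theta>. \<tau> \<subseteq> (\<lambda>x. Q *v x) ` g')"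
    then have "g' \<in> \<F>"
      using face_of_trans[OF _ \<open>g face_of F\<close>] by (auto simp: \<F>_def)
    then show "g' = g"
      using g_min g' face_of_imp_subset by blast
  qed fact+
  then show ?thesis
    using that \<open>g face_of F\<close> face_of_imp_subset by blast
qed

lemma finitely_supported_eq_constant_functions_iff:
  assumes "0 \<in> D"
  shows "{f :: real^'n \<Rightarrow> 'a::field. finite {m. f m \<noteq> 0} \<and> (\<forall>m. f m \<noteq> 0 \<longrightarrow> m \<in> D)} =
      constant_functions \<longleftrightarrow> D = {0}"
proof
  assume eq: "{f :: real^'n \<Rightarrow> 'a. finite {m. f m \<noteq> 0} \<and> (\<forall>m. f m \<noteq> 0 \<longrightarrow> m \<in> D)} =
      constant_functions"
  have "m = 0" if "m \<in> D" for m
  proof -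
    have "(\<lambda>x. if x = m then 1 else 0 :: 'a) \<in> constant_functions"
      using that by (simp flip: eq)
    then obtain c :: 'a where "(\<lambda>x. if x = m then 1 else 0 :: 'a) = (\<lambda>x. if x = 0 then c else 0)"
      unfolding constant_functions_def by blast
    from fun_cong[OF this, of m] show "m = 0"
      by (auto split: if_splits)
  qed
  then show "D = {0}"
    using assms by blast
next
  assume "D = {0}"
  have "f = (\<lambda>x. if x = 0 then f 0 else 0)" if "\<forall>m. f m \<noteq> 0 \<longrightarrow> m = 0" for f :: "real^'n \<Rightarrow> 'a"
    by (rule ext) (use that in auto)
  then show "{f :: real^'n \<Rightarrow> 'a. finite {m. f m \<noteq> 0} \<and> (\<forall>m. f m \<noteq> 0 \<longrightarrow> m \<in> D)} =
      constant_functions"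
    unfolding constant_functions_def \<open>D = {0}\<close>
    by (auto intro: finite_subset[of _ "{0}"] split: if_splits)
qed

context simplicial_basis
begin

lemma exists_cov_subset_facet:
  assumes "\<Theta> \<subseteq> proj_faces Q (gen_cone B)" "is_standard Q (gen_cone B) \<Theta>" "b \<in> B"
  obtains g where "g \<in> cov Q (gen_cone B) \<Theta>" "g \<subseteq> gen_cone (B - {b})"
proof -
  let ?F = "gen_cone (B - {b})"
  obtain \<tau> where "\<tau> \<in> \<Theta>" and \<tau>: "rel_interior \<tau> \<subseteq> rel_interior ((\<lambda>x. Q *v x) ` ?F)"
    using assms(2) facet_gen_cone_Diff[OF assms(3)] unfolding is_standard_def by blast
  then obtain g\<^sub>0 where "\<tau> = (\<lambda>x. Q *v x) ` g\<^sub>0" "g\<^sub>0 face_of gen_cone B"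
    using assms(1) unfolding proj_faces_def cone_face_def by blast
  then have "convex \<tau>"
    by (simp add: convex_linear_image face_of_imp_convex)
  moreover have "closed ((\<lambda>x. Q *v x) ` ?F)"
    using finite_B by (simp add: closed_linear_image_gen_cone)
  ultimately have \<tau>_subset: "\<tau> \<subseteq> (\<lambda>x. Q *v x) ` ?F"
    using order_trans[OF \<tau> rel_interior_subset] by (rule subset_closed_if_rel_interior_subset)
  have F: "?F face_of gen_cone B" "?F \<noteq> {}" "polyhedron ?F"
    using gen_cone_face_of[of "B - {b}"] convex_cone_contains_0[OF convex_cone_gen_cone] finite_B
    by (auto simp: polyhedron_gen_cone)
  show ?thesis
    by (rule exists_cov_subset_face[OF F \<open>\<tau> \<in> \<Theta>\<close> \<tau>_subset]) (rule that)
qed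

lemma chart_duals_subset_cone:
  assumes "\<Theta> \<subseteq> proj_faces Q (gen_cone B)" "is_standard Q (gen_cone B) \<Theta>"
    and "\<forall>\<sigma>\<in>fan_cones_pre Q (gen_cone B) \<Theta>. m \<in> chart_dual Q \<sigma>"
  shows "m \<in> gen_cone B"
proof -
  have "0 \<le> representation B m b" if "b \<in> B" for b
  proof -
    obtain g where g: "g \<in> cov Q (gen_cone B) \<Theta>" "g \<subseteq> gen_cone (B - {b})"
      using assms(1,2) \<open>b \<in> B\<close> by (rule exists_cov_subset_facet)
    obtain u where u: "\<And>x. representation B x b = u \<bullet> x"
      using linear_functional_eq_inner[OF linear_coordinate] by blast
    have "u \<in> perp_face (gen_cone B) g"
      using g(2) \<open>b \<in> B\<close>
      by (auto simp: perp_face_def dual_cone_def mem_cone_iff mem_gen_cone_iff simp flip: u)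
    moreover have "m \<in> chart_dual Q (perp_face (gen_cone B) g)"
      using assms(3) perp_face_mem_fan_cones_pre[OF g(1)] by blast
    ultimately show ?thesis
      unfolding chart_dual_def u by blast
  qed
  then show ?thesis
    by (simp add: mem_cone_iff)
qed

lemma global_functions_eq:
  assumes "is_bunch Q (gen_cone B) \<Theta>" "is_standard Q (gen_cone B) \<Theta>"
  shows "global_functions Q (gen_cone B) \<Theta> =
    {f. finite {m. f m \<noteq> 0} \<and> (\<forall>m. f m \<noteq> 0 \<longrightarrow> m \<in> lattice_pts \<inter> gen_cone B \<inter> {m. Q *v m = 0})}"
proof -
  have "\<Theta> \<subseteq> proj_faces Q (gen_cone B)"
    using assms(1) unfolding is_bunch_def by blast
  then have "(\<forall>\<sigma>\<in>fan_cones_pre Q (gen_cone B) \<Theta>. m \<in> chart_dual Q \<sigma>) \<longleftrightarrow> m \<in> gen_cone B"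
    if "Q *v m = 0" for m
    using chart_duals_subset_cone[OF _ assms(2)] cone_kernel_subset_chart_dual that by blast
  then show ?thesis
    unfolding global_functions_def by blast
qed

lemma global_functions_eq_constant_functions_iff:
  assumes "is_bunch Q (gen_cone B) \<Theta>" "is_standard Q (gen_cone B) \<Theta>"
  shows "global_functions Q (gen_cone B) \<Theta> = (constant_functions :: (real^'n \<Rightarrow> 'a::field) set) \<longleftrightarrow>
    lattice_pts \<inter> gen_cone B \<inter> {m. Q *v m = 0} = {0}"
proof -
  have "0 \<in> lattice_pts \<inter> gen_cone B \<inter> {m. Q *v m = 0}"
    by (simp add: lattice_pts_def convex_cone_contains_0[OF convex_cone_gen_cone])
  then show ?thesis
    unfolding global_functions_eq[OF assms] by (rule finitely_supported_eq_constant_functions_iff)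
qed

end

lemma projected_cone_simplicial_basis:
  fixes Q :: "real^'r^'k"
  assumes "projected_cone Q \<gamma>"
  obtains B where "simplicial_basis B" "\<gamma> = gen_cone B" "int_matrix Q" "B \<subseteq> lattice_pts"
proof -
  obtain B where "int_matrix Q" "independent B" "card B = CARD('r)" "B \<subseteq> lattice_pts"
    and "\<gamma> = gen_cone B"
    using assms unfolding projected_cone_def by blast
  moreover have "span B = UNIV"
    using card_eq_dim[of B UNIV] independent_bound[of B] calculation by auto
  ultimately show ?thesis
    using that simplicial_basis.intro by blast
qed

theorem proposition7p4:
  fixes Q :: "real^'r^'k" and \<gamma> :: "(real^'r) set" and \<Theta> :: "(real^'k) set set"
  assumes "alg_closed_field TYPE('K::field_char_0)"
    and "projected_cone Q \<gamma>"
    and "is_bunch Q \<gamma> \<Theta>"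
    and "is_standard Q \<gamma> \<Theta>"
  shows "global_functions Q \<gamma> \<Theta> = (constant_functions :: (real^'r \<Rightarrow> 'K) set) \<longleftrightarrow>
         ((\<forall>\<rho>. ray \<rho> \<gamma> \<longrightarrow> (\<lambda>x. Q *v x) ` \<rho> \<noteq> {0}) \<and>
          strictly_convex ((\<lambda>x. Q *v x) ` \<gamma>))"
proof -
  obtain B where "simplicial_basis B" and \<gamma>: "\<gamma> = gen_cone B" and "int_matrix Q" "B \<subseteq> lattice_pts"
    using assms(2) by (rule projected_cone_simplicial_basis)
  interpret simplicial_basis B
    by fact
  have "global_functions Q \<gamma> \<Theta> = (constant_functions :: (real^'r \<Rightarrow> 'K) set) \<longleftrightarrow>
      lattice_pts \<inter> gen_cone B \<inter> {m. Q *v m = 0} = {0}"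
    using assms(3,4) unfolding \<gamma> by (rule global_functions_eq_constant_functions_iff)
  also have "\<dots> \<longleftrightarrow> gen_cone B \<inter> {x. Q *v x = 0} = {0}"
    by (rule lattice_cone_kernel_eq_0_iff) fact+
  also have "\<dots> \<longleftrightarrow> (\<forall>\<rho>. ray \<rho> \<gamma> \<longrightarrow> (\<lambda>x. Q *v x) ` \<rho> \<noteq> {0}) \<and>
      strictly_convex ((\<lambda>x. Q *v x) ` \<gamma>)"
    unfolding \<gamma> by (rule cone_Int_kernel_eq_0_iff[OF matrix_vector_mul_linear])
  finally show ?thesis .
qed

end
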